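(* Let $a,b,c\in\mathbb{R}$ with $a,c\neq 0$ and let $(X,J_{a,b,c})$ be the compact almost-complex manifold described in the context. Then $h^{1,0}_{\mathrm{Dol}}=1$ (spanned by $\varphi^1$), $h^{2,0}_{\mathrm{Dol}}=0$, $h^{3,0}_{\mathrm{Dol}}=0$.
   Context: General notions. For an almost-complex manifold $(X,J)$, $A^k(X)=\bigoplus_{p+q=k}A^{p,q}(X)$ and $d=\mu+\partial+\overline{\partial}+\bar\mu$ with $\mu:A^{p,q}\to A^{p+2,q-1}$, $\partial:A^{p,q}\to A^{p+1,q}$, $\overline{\partial}:A^{p,q}\to A^{p,q+1}$, $\bar\mu:A^{p,q}\to A^{p-1,q+2}$. The almost-complex Dolbeault cohomology (of Cirici–Wilson) in bidegree $(p,0)$ is $H^{p,0}_{\mathrm{Dol}}(X)=\{\psi\in A^{p,0}(X):\overline{\partial}\psi=0,\ \bar\mu\psi=0\}$, and $h^{p,0}_{\mathrm{Dol}}$ is its complex dimension. The manifold. Let $G$ be the Lie group $\mathbb{R}^2\ltimes_\Phi\mathbb{R}^4$ with coordinates $(t,x,y_1,y_2,z_1,z_2)$ and product $(t,x,y_1,y_2,z_1,z_2)*(t',x',y_1',y_2',z_1',z_2')=(t+t',x+x',y_1'e^t+xz_1'e^t+y_1,\,y_2'e^{-t}+xz_2'e^{-t}+y_2,\,z_1'e^t+z_1,\,z_2'e^{-t}+z_2)$. Let $B\in SL(2,\mathbb{Z})$ have distinct eigenvalues $e^{a_0},e^{-a_0}$ ($a_0>0$) and $P$ real invertible with $PBP^{-1}=\mathrm{diag}(e^{a_0},e^{-a_0})$.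 Let $\Gamma$ be the lattice of elements with $t\in a_0\mathbb{Z}$, $x\in\mathbb{Z}$, $(y_1,y_2)=(m_1,m_2)P^t$, $(z_1,z_2)=(n_1,n_2)P^t$, $m_i,n_i\in\mathbb{Z}$, and $X=\Gamma\backslash G$. Left-invariant $1$-forms: $e^1=dt$, $e^2=dx$, $e^3=e^{-t}dy_1-xe^{-t}dz_1$, $e^4=e^{t}dy_2-xe^{t}dz_2$, $e^5=e^{-t}dz_1$, $e^6=e^tdz_2$, with $de^1=de^2=0$, $de^3=-e^{13}-e^{25}$, $de^4=e^{14}-e^{26}$, $de^5=-e^{15}$, $de^6=e^{16}$. The structures. For $a,b,c\in\mathbb{R}$, $a,c\neq0$: $J_{a,b,c}$ is the almost-complex structure whose $(1,0)$-forms are spanned by $\varphi^1=ae^1+ie^2$, $\varphi^2=be^5+ce^3+ie^6$, $\varphi^3=ce^4+ie^5$ (it is compatible with the symplectic form $\omega_{a,b,c}=ae^{12}+be^{56}+c(e^{36}+e^{45})$). *)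

theory Defs
  imports "HOL-Analysis.Analysis"
begin

text \<open>An element of the exterior algebra of a 6-dimensional complex space with a fixed
  ordered basis v_0,...,v_5 is represented by its coefficient function: the coefficient of
  the monomial v_{i1} wedge ... wedge v_{ip} (i1 < ... < ip) is the value at {i1,...,ip}.
  Only subsets of {0..<6} are meaningful.\<close>

type_synonym lform = "nat set \<Rightarrow> complex"

definition lzero :: lform where "lzero = (\<lambda>K. 0)"
definition ladd :: "lform \<Rightarrow> lform \<Rightarrow> lform" where "ladd \<alpha> \<beta> = (\<lambda>K. \<alpha> K + \<beta> K)"
definition lscale :: "complex \<Rightarrow> lform \<Rightarrow> lform" where "lscale z \<alpha> = (\<lambda>K. z * \<alpha> K)"
definition lsum :: "('i \<Rightarrow> lform) \<Rightarrow> 'i set \<Rightarrow> lform" where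
  "lsum F S = (\<lambda>K. \<Sum>i\<in>S. F i K)"
definition mono :: "nat set \<Rightarrow> lform" where "mono I = (\<lambda>K. if K = I then 1 else 0)"
definition gen :: "nat \<Rightarrow> lform" where "gen i = mono {i}"

text \<open>sign of the shuffle bringing (I,J) (each listed increasingly) into increasing order\<close>
definition shuffle_sign :: "nat set \<Rightarrow> nat set \<Rightarrow> complex" where
  "shuffle_sign I J = (-1) ^ card {(i,j). i \<in> I \<and> j \<in> J \<and> j < i}"

definition wedge :: "lform \<Rightarrow> lform \<Rightarrow> lform" where
  "wedge \<alpha> \<beta> = (\<lambda>K. \<Sum>I\<in>Pow K. shuffle_sign I (K - I) * \<alpha> I * \<beta> (K - I))"

definition wedge_list :: "lform list \<Rightarrow> lform" where
  "wedge_list vs = foldr wedge vs (mono {})"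

definition ext_map :: "(nat \<Rightarrow> lform) \<Rightarrow> lform \<Rightarrow> lform" where
  "ext_map img \<alpha> = lsum (\<lambda>J. lscale (\<alpha> J) (wedge_list (map img (sorted_list_of_set J)))) (Pow {0..<6})"

text \<open>Points of G = R^2 semidirect R^4 are vectors g with coordinates
  (t,x,y1,y2,z1,z2) = (g$1,g$2,g$3,g$4,g$5,g$6).\<close>

definition Gmul :: "real^6 \<Rightarrow> real^6 \<Rightarrow> real^6" where
  "Gmul g h = (\<chi> i.
     if i = 1 then g$1 + h$1
     else if i = 2 then g$2 + h$2
     else if i = 3 then h$3 * exp (g$1) + g$2 * h$5 * exp (g$1) + g$3
     else if i = 4 then h$4 * exp (- g$1) + g$2 * h$6 * exp (- g$1) + g$4
     else if i = 5 then h$5 * exp (g$1) + g$5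
     else h$6 * exp (- g$1) + g$6)"

definition Lattice :: "real \<Rightarrow> real^2^2 \<Rightarrow> (real^6) set" where
  "Lattice a0 P = {g. \<exists>k n m1 m2 n1 n2 :: int.
      g$1 = a0 * of_int k \<and> g$2 = of_int n \<and>
      g$3 = of_int m1 * P$1$1 + of_int m2 * P$1$2 \<and>
      g$4 = of_int m1 * P$2$1 + of_int m2 * P$2$2 \<and>
      g$5 = of_int n1 * P$1$1 + of_int n2 * P$1$2 \<and>
      g$6 = of_int n1 * P$2$1 + of_int n2 * P$2$2}"

text \<open>functions on X = Gamma \ G = left-Gamma-invariant functions on G\<close>
definition gamma_inv :: "real \<Rightarrow> real^2^2 \<Rightarrow> (real^6 \<Rightarrow> complex) \<Rightarrow> bool" where
  "gamma_inv a0 P f \<longleftrightarrow> (\<forall>\<gamma>\<in>Lattice a0 P. \<forall>g. f (Gmul \<gamma> g) = f g)"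

definition partial :: "6 \<Rightarrow> (real^6 \<Rightarrow> complex) \<Rightarrow> real^6 \<Rightarrow> complex" where
  "partial j f g = vector_derivative (\<lambda>s. f (g + s *\<^sub>R axis j 1)) (at 0)"

coinductive smooth :: "(real^6 \<Rightarrow> complex) \<Rightarrow> bool" where
  "(\<forall>g. f differentiable (at g)) \<Longrightarrow> (\<forall>j. smooth (partial j f)) \<Longrightarrow> smooth f"

text \<open>Real left-invariant coframe e^1..e^6 is indexed 0..5. Complex coframe
  theta_0,theta_1,theta_2 = phi^1,phi^2,phi^3 and theta_3,theta_4,theta_5 their conjugates.\<close>

text \<open>d e^j, in the e-basis\<close>
definition de :: "nat \<Rightarrow> lform" where
  "de j = (if j = 2 then ladd (lscale (-1) (mono {0,2})) (lscale (-1) (mono {1,4}))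
      else if j = 3 then ladd (mono {0,3}) (lscale (-1) (mono {1,5}))
      else if j = 4 then lscale (-1) (mono {0,4})
      else if j = 5 then mono {0,5}
      else lzero)"

text \<open>coordinate differentials dt,dx,dy1,dy2,dz1,dz2 at g, in the e-basis\<close>
definition dcoord :: "real^6 \<Rightarrow> 6 \<Rightarrow> lform" where
  "dcoord g j = (let t = g$1; x = g$2 in
      if j = 1 then gen 0
      else if j = 2 then gen 1
      else if j = 3 then ladd (lscale (exp t) (gen 2)) (lscale (x * exp t) (gen 4))
      else if j = 4 then ladd (lscale (exp (-t)) (gen 3)) (lscale (x * exp (-t)) (gen 5))
      else if j = 5 then lscale (exp t) (gen 4)
      else lscale (exp (-t)) (gen 5))"

text \<open>theta_k = sum_j theta_coef k j e^j:
  phi^1 = a e^1 + i e^2, phi^2 = c e^3 + b e^5 + i e^6, phi^3 = c e^4 + i e^5\<close>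
definition theta_coef :: "real \<Rightarrow> real \<Rightarrow> real \<Rightarrow> nat \<Rightarrow> nat \<Rightarrow> complex" where
  "theta_coef a b c k j =
     (if k = 0 then (if j = 0 then of_real a else if j = 1 then \<i> else 0)
      else if k = 1 then (if j = 2 then of_real c else if j = 4 then of_real b else if j = 5 then \<i> else 0)
      else if k = 2 then (if j = 3 then of_real c else if j = 4 then \<i> else 0)
      else if k = 3 then (if j = 0 then of_real a else if j = 1 then - \<i> else 0)
      else if k = 4 then (if j = 2 then of_real c else if j = 4 then of_real b else if j = 5 then - \<i> else 0)
      else if k = 5 then (if j = 3 then of_real c else if j = 4 then - \<i> else 0)
      else 0)"

text \<open>the inverse change of basis: e^{j+1} expressed in the theta-basis
  e^1 = (th0+th3)/(2a), e^2 = (th0-th3)/(2i), e^3 = (th1+th4)/(2c) - (b/c) e^5,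
  e^4 = (th2+th5)/(2c), e^5 = (th2-th5)/(2i), e^6 = (th1-th4)/(2i)\<close>
definition e_in_theta :: "real \<Rightarrow> real \<Rightarrow> real \<Rightarrow> nat \<Rightarrow> lform" where
  "e_in_theta a b c j =
     (if j = 0 then lscale (1 / (2 * of_real a)) (ladd (gen 0) (gen 3))
      else if j = 1 then lscale (1 / (2 * \<i>)) (ladd (gen 0) (lscale (-1) (gen 3)))
      else if j = 2 then ladd (lscale (1 / (2 * of_real c)) (ladd (gen 1) (gen 4)))
                              (lscale (- of_real b / (of_real c * 2 * \<i>)) (ladd (gen 2) (lscale (-1) (gen 5))))
      else if j = 3 then lscale (1 / (2 * of_real c)) (ladd (gen 2) (gen 5))
      else if j = 4 then lscale (1 / (2 * \<i>)) (ladd (gen 2) (lscale (-1) (gen 5)))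
      else if j = 5 then lscale (1 / (2 * \<i>)) (ladd (gen 1) (lscale (-1) (gen 4)))
      else lzero)"

text \<open>change from e-basis coefficients to theta-basis coefficients\<close>
definition to_theta :: "real \<Rightarrow> real \<Rightarrow> real \<Rightarrow> lform \<Rightarrow> lform" where
  "to_theta a b c = ext_map (e_in_theta a b c)"

definition dtheta :: "real \<Rightarrow> real \<Rightarrow> real \<Rightarrow> nat \<Rightarrow> lform" where
  "dtheta a b c k = to_theta a b c (lsum (\<lambda>j. lscale (theta_coef a b c k j) (de j)) {0..<6})"

text \<open>d of a monomial theta_{k1} wedge ... wedge theta_{kp} (Leibniz rule)\<close>
primrec dmono_list :: "real \<Rightarrow> real \<Rightarrow> real \<Rightarrow> nat list \<Rightarrow> lform" where
  "dmono_list a b c [] = lzero"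
| "dmono_list a b c (k # ks) =
     ladd (wedge (dtheta a b c k) (wedge_list (map gen ks)))
          (lscale (-1) (wedge (gen k) (dmono_list a b c ks)))"

definition dfun :: "real \<Rightarrow> real \<Rightarrow> real \<Rightarrow> (real^6 \<Rightarrow> complex) \<Rightarrow> real^6 \<Rightarrow> lform" where
  "dfun a b c f g = to_theta a b c (lsum (\<lambda>j. lscale (partial j f g) (dcoord g j)) UNIV)"

text \<open>A complex form on X is written psi = sum_K psi_K theta^K with psi_K smooth
  Gamma-invariant functions on G; it is represented by g |-> (K |-> psi_K(g)).\<close>

definition dform :: "real \<Rightarrow> real \<Rightarrow> real \<Rightarrow> (real^6 \<Rightarrow> lform) \<Rightarrow> real^6 \<Rightarrow> lform" where
  "dform a b c \<psi> g = lsum (\<lambda>K. ladd (wedge (dfun a b c (\<lambda>h. \<psi> h K) g) (mono K))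
                                     (lscale (\<psi> g K) (dmono_list a b c (sorted_list_of_set K))))
                        (Pow {0..<6})"

definition bideg :: "nat \<Rightarrow> nat \<Rightarrow> nat set set" where
  "bideg p q = {K. K \<subseteq> {0..<6} \<and> card (K \<inter> {0,1,2}) = p \<and> card (K \<inter> {3,4,5}) = q}"

definition proj :: "nat \<Rightarrow> nat \<Rightarrow> lform \<Rightarrow> lform" where
  "proj p q \<alpha> = (\<lambda>K. if K \<in> bideg p q then \<alpha> K else 0)"

definition is_form :: "real \<Rightarrow> real^2^2 \<Rightarrow> nat \<Rightarrow> nat \<Rightarrow> (real^6 \<Rightarrow> lform) \<Rightarrow> bool" where
  "is_form a0 P p q \<psi> \<longleftrightarrow>
     (\<forall>K. (K \<notin> bideg p q \<longrightarrow> (\<forall>g. \<psi> g K = 0)) \<and> smooth (\<lambda>g. \<psi> g K) \<and> gamma_inv a0 P (\<lambda>g. \<psi> g K))"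

definition dbar :: "real \<Rightarrow> real \<Rightarrow> real \<Rightarrow> nat \<Rightarrow> nat \<Rightarrow> (real^6 \<Rightarrow> lform) \<Rightarrow> real^6 \<Rightarrow> lform" where
  "dbar a b c p q \<psi> g = proj p (q + 1) (dform a b c \<psi> g)"

definition mubar :: "real \<Rightarrow> real \<Rightarrow> real \<Rightarrow> nat \<Rightarrow> nat \<Rightarrow> (real^6 \<Rightarrow> lform) \<Rightarrow> real^6 \<Rightarrow> lform" where
  "mubar a b c p q \<psi> g = (if p = 0 then lzero else proj (p - 1) (q + 2) (dform a b c \<psi> g))"

definition H_Dol_p0 :: "real \<Rightarrow> real \<Rightarrow> real \<Rightarrow> real \<Rightarrow> real^2^2 \<Rightarrow> nat \<Rightarrow> (real^6 \<Rightarrow> lform) set" where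
  "H_Dol_p0 a b c a0 P p =
     {\<psi>. is_form a0 P p 0 \<psi> \<and> (\<forall>g. dbar a b c p 0 \<psi> g = lzero) \<and> (\<forall>g. mubar a b c p 0 \<psi> g = lzero)}"

end

theory Submission
  imports Defs "HOL-Complex_Analysis.Cauchy_Integral_Formula"
begin

text \<open>On a (p,0)-form, \<open>mubar\<close> only sees the coefficients on wedges containing \<open>\<phi>\<^sup>2\<close> or
  \<open>\<phi>\<^sup>3\<close>, through the mubar-parts of \<open>d\<phi>\<^sup>2, d\<phi>\<^sup>3\<close>; these form a 2\<times>2 matrix of determinant
  \<open>-(1/(4a\<^sup>2) + c\<^sup>2/16) \<noteq> 0\<close>, so all such coefficients vanish. As \<open>\<phi>\<^sup>1\<close> is closed, what
  remains in degree 1 is \<open>f \<phi>\<^sup>1\<close> with \<open>dbar f = 0\<close>, and nothing remains in degrees 2 and 3.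
  Differentiating the three equations of \<open>dbar f = 0\<close> along the \<open>(t,x)\<close>-directions (brackets
  of the (0,1)-vector fields) gives enough first-order relations to kill the derivatives of \<open>f\<close>
  in \<open>y\<^sub>1, y\<^sub>2, z\<^sub>1, z\<^sub>2\<close>. So \<open>f\<close> is a holomorphic function of \<open>w = x - i a t\<close>, invariant
  under the lattice translations \<open>t \<mapsto> t + a\<^sub>0\<close>, \<open>x \<mapsto> x + 1\<close>; hence bounded and, by
  Liouville, constant.\<close>

section \<open>Calculus in the exterior algebra\<close>

lemma ladd_apply [simp]: "ladd \<alpha> \<beta> K = \<alpha> K + \<beta> K"
  by (simp add: ladd_def)

lemma lscale_apply [simp]: "lscale z \<alpha> K = z * \<alpha> K"
  by (simp add: lscale_def)

lemma lzero_apply [simp]: "lzero K = 0"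
  by (simp add: lzero_def)

lemma lsum_apply [simp]: "lsum F S K = (\<Sum>i\<in>S. F i K)"
  by (simp add: lsum_def)

lemma mono_apply [simp]: "mono I K = (if K = I then 1 else 0)"
  by (simp add: mono_def)

lemma shuffle_sign_empty_left [simp]: "shuffle_sign {} J = 1"
  by (simp add: shuffle_sign_def)

lemma shuffle_sign_empty_right [simp]: "shuffle_sign I {} = 1"
  by (simp add: shuffle_sign_def)

text \<open>Lets the simplifier decide equality of explicit finite sets of numerals.\<close>
lemma insert_eq_iff_sorted_list:
  "finite A \<Longrightarrow> finite B \<Longrightarrow>
    insert (a::nat) A = insert b B \<longleftrightarrow> sorted_list_of_set (insert a A) = sorted_list_of_set (insert b B)"
  by (metis finite_insert sorted_list_of_set.set_sorted_key_list_of_set)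

lemma wedge_lzero_left [simp]: "wedge lzero \<beta> = lzero"
  by (simp add: wedge_def fun_eq_iff)

lemma wedge_lzero_right [simp]: "wedge \<alpha> lzero = lzero"
  by (simp add: wedge_def fun_eq_iff)

lemma wedge_mono_empty_right:
  assumes "finite K"
  shows "wedge \<alpha> (mono {}) K = \<alpha> K"
proof -
  have "wedge \<alpha> (mono {}) K = (\<Sum>I\<in>Pow K. if I = K then \<alpha> K else 0)"
    unfolding wedge_def by (rule sum.cong) auto
  also have "\<dots> = \<alpha> K"
    using assms by simp
  finally show ?thesis .
qed

lemma wedge_mono_not_subset: "\<not> K \<subseteq> L \<Longrightarrow> wedge \<alpha> (mono K) L = 0"
  unfolding wedge_def by (rule sum.neutral) auto

lemma wedge_cong_right:
  "(\<And>K. finite K \<Longrightarrow> \<beta> K = \<beta>' K) \<Longrightarrow> finite L \<Longrightarrow> wedge \<alpha> \<beta> L = wedge \<alpha> \<beta>' L"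
  unfolding wedge_def by (rule sum.cong) (auto intro: finite_subset)

lemma wedge_gen_left:
  assumes "finite L"
  shows "wedge (gen i) \<beta> L = (if i \<in> L then (-1) ^ card (L \<inter> {..<i}) * \<beta> (L - {i}) else 0)"
proof -
  have "wedge (gen i) \<beta> L =
      (\<Sum>I\<in>Pow L. if I = {i} then shuffle_sign {i} (L - {i}) * \<beta> (L - {i}) else 0)"
    unfolding wedge_def by (rule sum.cong) (simp_all add: gen_def)
  also have "\<dots> = (if i \<in> L then shuffle_sign {i} (L - {i}) * \<beta> (L - {i}) else 0)"
    using assms by (subst sum.delta) auto
  also have "shuffle_sign {i} (L - {i}) = (-1) ^ card (L \<inter> {..<i})"
  proof -
    have "{(i', j). i' \<in> {i} \<and> j \<in> L - {i} \<and> j < i'} = Pair i ` (L \<inter> {..<i})"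
      by auto
    then show ?thesis
      by (simp add: shuffle_sign_def card_image inj_on_def)
  qed
  finally show ?thesis .
qed

lemma wedge_gen_right:
  assumes "finite L"
  shows "wedge \<beta> (gen j) L = (if j \<in> L then (-1) ^ card (L \<inter> {j<..}) * \<beta> (L - {j}) else 0)"
proof -
  have "wedge \<beta> (gen j) L =
      (\<Sum>I\<in>Pow L. if I = L - {j} then (if j \<in> L then shuffle_sign (L - {j}) {j} * \<beta> (L - {j}) else 0) else 0)"
    unfolding wedge_def
  proof (rule sum.cong)
    fix I assume "I \<in> Pow L"
    then have "L - I = {j} \<longleftrightarrow> I = L - {j} \<and> j \<in> L"
      by auto
    then show "shuffle_sign I (L - I) * \<beta> I * gen j (L - I) =
      (if I = L - {j} then (if j \<in> L then shuffle_sign (L - {j}) {j} * \<beta> (L - {j}) else 0) else 0)"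
      by (auto simp: gen_def)
  qed simp
  also have "\<dots> = (if j \<in> L then shuffle_sign (L - {j}) {j} * \<beta> (L - {j}) else 0)"
    using assms by (subst sum.delta) auto
  also have "shuffle_sign (L - {j}) {j} = (-1) ^ card (L \<inter> {j<..})"
  proof -
    have "{(i, j'). i \<in> L - {j} \<and> j' \<in> {j} \<and> j' < i} = (\<lambda>i. (i, j)) ` (L \<inter> {j<..})"
      by auto
    then show ?thesis
      by (simp add: shuffle_sign_def card_image inj_on_def)
  qed
  finally show ?thesis .
qed

lemma wedge_doubleton:
  assumes "p < q"
  shows "wedge \<alpha> \<beta> {p,q} = \<alpha> {} * \<beta> {p,q} + \<alpha> {p} * \<beta> {q} - \<alpha> {q} * \<beta> {p} + \<alpha> {p,q} * \<beta> {}"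
proof -
  have pq: "p \<noteq> q"
    using assms by simp
  have Pow_pq: "Pow {p,q} = insert {} (insert {p} (insert {q} {{p,q}}))"
    by (auto simp: Pow_insert)
  have sign_pq: "shuffle_sign {p} {q} = 1"
  proof -
    have "{(i, j). i \<in> {p} \<and> j \<in> {q} \<and> j < i} = {}"
      using assms by auto
    then show ?thesis
      by (simp only: shuffle_sign_def) simp
  qed
  have sign_qp: "shuffle_sign {q} {p} = -1"
  proof -
    have "{(i, j). i \<in> {q} \<and> j \<in> {p} \<and> j < i} = {(q,p)}"
      using assms by auto
    then show ?thesis
      by (simp add: shuffle_sign_def)
  qed
  have diffs: "{p,q} - {p} = {q}" "{p,q} - {q} = {p}" "{p,q} - {p,q} = {}" "{p,q} - {} = {p,q}"
    using pq by auto
  have distinct: "{} \<notin> insert {p} (insert {q} {{p,q}})" "{p} \<notin> insert {q} {{p,q}}" "{q} \<notin> {{p,q}}"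
    using pq by (auto simp: doubleton_eq_iff)
  show ?thesis
    unfolding wedge_def Pow_pq
    apply (subst sum.insert, simp, rule distinct)+
    apply (simp add: diffs sign_pq sign_qp)
    done
qed

lemma wedge_list_Nil: "wedge_list [] = mono {}"
  by (simp add: wedge_list_def)

lemma wedge_list_single: "finite K \<Longrightarrow> wedge_list [x] K = x K"
  by (simp add: wedge_list_def wedge_mono_empty_right)

lemma wedge_list_pair: "finite K \<Longrightarrow> wedge_list [x, y] K = wedge x y K"
  unfolding wedge_list_def by (simp add: wedge_cong_right[OF wedge_mono_empty_right])

lemma wedge_wedge_list_gen: "finite L \<Longrightarrow> wedge \<alpha> (wedge_list [gen j]) L = wedge \<alpha> (gen j) L"
  by (rule wedge_cong_right) (simp_all add: wedge_list_single)

lemma ext_map_ladd: "ext_map img (ladd \<alpha> \<beta>) = ladd (ext_map img \<alpha>) (ext_map img \<beta>)"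
  by (simp add: ext_map_def fun_eq_iff distrib_right sum.distrib)

lemma ext_map_lscale: "ext_map img (lscale z \<alpha>) = lscale z (ext_map img \<alpha>)"
  by (simp add: ext_map_def fun_eq_iff sum_distrib_left mult.assoc)

lemma ext_map_lzero: "ext_map img lzero = lzero"
  by (simp add: ext_map_def fun_eq_iff)

lemma ext_map_lsum: "finite S \<Longrightarrow> ext_map img (lsum F S) = lsum (\<lambda>i. ext_map img (F i)) S"
  by (simp add: ext_map_def fun_eq_iff sum_distrib_right sum.swap[of _ S])

lemma ext_map_mono:
  assumes "J \<subseteq> {0..<6}"
  shows "ext_map img (mono J) = wedge_list (map img (sorted_list_of_set J))"
proof
  fix K
  have "ext_map img (mono J) K =
      (\<Sum>I\<in>Pow {0..<6}. if I = J then wedge_list (map img (sorted_list_of_set J)) K else 0)"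
    unfolding ext_map_def lsum_apply lscale_apply mono_apply by (rule sum.cong) auto
  also have "\<dots> = wedge_list (map img (sorted_list_of_set J)) K"
    using assms by (subst sum.delta) auto
  finally show "ext_map img (mono J) K = wedge_list (map img (sorted_list_of_set J)) K" .
qed

lemma ext_map_gen: "i < 6 \<Longrightarrow> finite K \<Longrightarrow> ext_map img (gen i) K = img i K"
  by (simp add: gen_def ext_map_mono wedge_list_single)

section \<open>Structure equations of the coframe \<open>\<phi>\<close>\<close>

lemma sum_upto6: "(\<Sum>j\<in>{0..<6::nat}. f j) = f 0 + f 1 + f 2 + f 3 + f 4 + f 5"
  by (simp add: eval_nat_numeral)

lemma dtheta_0: "dtheta a b c 0 = lzero"
proof -
  have "lsum (\<lambda>j. lscale (theta_coef a b c 0 j) (de j)) {0..<6} = lzero"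
    by (simp add: fun_eq_iff sum_upto6 theta_coef_def de_def)
  then show ?thesis
    by (simp add: dtheta_def to_theta_def ext_map_lzero)
qed

lemma to_theta_de: "to_theta a b c (de j) =
  (if j = 2 then ladd (lscale (-1) (wedge_list [e_in_theta a b c 0, e_in_theta a b c 2]))
                      (lscale (-1) (wedge_list [e_in_theta a b c 1, e_in_theta a b c 4]))
   else if j = 3 then ladd (wedge_list [e_in_theta a b c 0, e_in_theta a b c 3])
                           (lscale (-1) (wedge_list [e_in_theta a b c 1, e_in_theta a b c 5]))
   else if j = 4 then lscale (-1) (wedge_list [e_in_theta a b c 0, e_in_theta a b c 4])
   else if j = 5 then wedge_list [e_in_theta a b c 0, e_in_theta a b c 5]
   else lzero)"
  by (simp add: de_def to_theta_def ext_map_ladd ext_map_lscale ext_map_mono ext_map_lzero)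

lemma dtheta_eq_sum: "dtheta a b c k = lsum (\<lambda>j. lscale (theta_coef a b c k j) (to_theta a b c (de j))) {0..<6}"
  by (simp add: dtheta_def to_theta_def ext_map_lsum ext_map_lscale)

lemma wedge_list_pair_doubleton:
  "p < q \<Longrightarrow> wedge_list [x, y] {p,q} = x {} * y {p,q} + x {p} * y {q} - x {q} * y {p} + x {p,q} * y {}"
  by (simp add: wedge_list_pair wedge_doubleton)

text \<open>The mubar-parts of \<open>d\<phi>\<^sup>2\<close> and \<open>d\<phi>\<^sup>3\<close>: indices 1, 2 are \<open>\<phi>\<^sup>2, \<phi>\<^sup>3\<close>, and the index sets
  \<open>{3,4}\<close>, \<open>{3,5}\<close> are the conjugates of \<open>\<phi>\<^sup>1\<^sup>2\<close>, \<open>\<phi>\<^sup>1\<^sup>3\<close>.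
  They form a matrix of determinant \<open>-(1/(4a\<^sup>2) + c\<^sup>2/16) \<noteq> 0\<close>.\<close>
lemma dtheta_mubar_coeffs:
  assumes "a \<noteq> 0" "c \<noteq> 0"
  shows "dtheta a b c 1 {3,4} = - 1 / (2 * of_real a)"
    and "dtheta a b c 1 {3,5} = of_real c / 4"
    and "dtheta a b c 2 {3,4} = of_real c / 4"
    and "dtheta a b c 2 {3,5} = 1 / (2 * of_real a)"
  using assms
  by (simp_all add: dtheta_eq_sum sum_upto6 to_theta_de wedge_list_pair_doubleton theta_coef_def
      e_in_theta_def gen_def insert_eq_iff_sorted_list field_simps)

lemmas dtheta_mubar_coeffs' = dtheta_mubar_coeffs[unfolded One_nat_def]

lemma dmono_list_Cons_apply:
  "dmono_list a b c (k # ks) L =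
     wedge (dtheta a b c k) (wedge_list (map gen ks)) L - wedge (gen k) (dmono_list a b c ks) L"
  by simp

lemmas dmono_list_simps = dmono_list_Cons_apply wedge_wedge_list_gen wedge_list_Nil
  wedge_mono_empty_right wedge_gen_left wedge_gen_right Int_insert_left insert_Diff_if

section \<open>Forms of bidegree (p,0)\<close>

lemma smooth_const: "smooth (\<lambda>g. z)"
proof -
  have "\<exists>z. f = (\<lambda>g. z) \<Longrightarrow> smooth f" for f
  proof (coinduction arbitrary: f rule: smooth.coinduct)
    case (smooth f)
    then obtain z where "f = (\<lambda>g. z)"
      by blast
    then show ?case
      by (intro exI[of _ "\<lambda>g. z"] conjI) (auto intro!: exI[of _ 0] simp: partial_def fun_eq_iff)
  qed
  then show ?thesis
    by blast
qed

lemma dfun_const [simp]: "dfun a b c (\<lambda>h. z) g = lzero"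
proof -
  have "lsum (\<lambda>j. lscale (partial j (\<lambda>h. z) g) (dcoord g j)) UNIV = lzero"
    by (simp add: partial_def fun_eq_iff)
  then show ?thesis
    by (simp add: dfun_def to_theta_def ext_map_lzero)
qed

lemma bideg_p0_subset: "K \<in> bideg p 0 \<Longrightarrow> K \<subseteq> {0,1,2}"
proof
  fix x assume K: "K \<in> bideg p 0" and x: "x \<in> K"
  then have "K \<subseteq> {0..<6}" "card (K \<inter> {3,4,5}) = 0"
    by (auto simp: bideg_def)
  then have "x < 6" "x \<notin> {3,4,5}"
    using x by auto
  then show "x \<in> {0,1,2}"
    by auto
qed

lemma Pow_012: "Pow {0,1,2::nat} = {{},{0},{1},{2},{0,1},{0,2},{1,2},{0,1,2}}"
  by (simp add: Pow_insert insert_commute)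

lemma sum_Pow_012:
  "(\<Sum>K\<in>Pow {0,1,2::nat}. F K) = F {} + F {0} + F {1} + F {2} + F {0,1} + F {0,2} + F {1,2} + F {0,1,2}"
  unfolding Pow_012 by (simp add: insert_eq_iff_sorted_list add.assoc)

lemma subset_012_cases:
  "K \<subseteq> {0,1,2::nat} \<Longrightarrow>
    K = {} \<or> K = {0} \<or> K = {1} \<or> K = {2} \<or> K = {0,1} \<or> K = {0,2} \<or> K = {1,2} \<or> K = {0,1,2}"
  using Pow_012 by blast

lemma zero_in_H_Dol_p0: "(\<lambda>g. lzero) \<in> H_Dol_p0 a b c a0 P p"
  by (simp add: H_Dol_p0_def is_form_def smooth_const gamma_inv_def dbar_def mubar_def proj_def
      dform_def fun_eq_iff)

lemma H_Dol_p0_D: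
  assumes "\<psi> \<in> H_Dol_p0 a b c a0 P p"
  shows H_Dol_p0_bideg: "\<And>K h. K \<notin> bideg p 0 \<Longrightarrow> \<psi> h K = 0"
    and H_Dol_p0_support: "\<And>K h. \<not> K \<subseteq> {0,1,2} \<Longrightarrow> \<psi> h K = 0"
    and H_Dol_p0_mubar: "\<And>g L. p \<noteq> 0 \<Longrightarrow> L \<in> bideg (p - 1) 2 \<Longrightarrow> dform a b c \<psi> g L = 0"
    and H_Dol_p0_dbar: "\<And>g L. L \<in> bideg p 1 \<Longrightarrow> dform a b c \<psi> g L = 0"
    and H_Dol_p0_is_form: "is_form a0 P p 0 \<psi>"
proof -
  from assms have F: "is_form a0 P p 0 \<psi>" and D: "\<And>g. dbar a b c p 0 \<psi> g = lzero"
    and M: "\<And>g. mubar a b c p 0 \<psi> g = lzero"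
    by (auto simp: H_Dol_p0_def)
  show Z: "\<And>K h. K \<notin> bideg p 0 \<Longrightarrow> \<psi> h K = 0"
    using F by (auto simp: is_form_def)
  show "\<And>K h. \<not> K \<subseteq> {0,1,2} \<Longrightarrow> \<psi> h K = 0"
    using Z bideg_p0_subset by blast
  show "\<And>g L. p \<noteq> 0 \<Longrightarrow> L \<in> bideg (p - 1) 2 \<Longrightarrow> dform a b c \<psi> g L = 0"
    using M by (auto simp: mubar_def proj_def fun_eq_iff lzero_def split: if_splits)
      (metis numeral_2_eq_2 one_add_one)
  show "\<And>g L. L \<in> bideg p 1 \<Longrightarrow> dform a b c \<psi> g L = 0"
    using D by (auto simp: dbar_def proj_def fun_eq_iff lzero_def split: if_splits) metis
  show "is_form a0 P p 0 \<psi>"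
    by (rule F)
qed

lemma H_Dol_p0_dform_eq:
  assumes "\<psi> \<in> H_Dol_p0 a b c a0 P p"
  shows "dform a b c \<psi> g L = (\<Sum>K\<in>Pow {0,1,2}.
     wedge (dfun a b c (\<lambda>h. \<psi> h K) g) (mono K) L + \<psi> g K * dmono_list a b c (sorted_list_of_set K) L)"
  unfolding dform_def lsum_apply ladd_apply lscale_apply
proof (rule sum.mono_neutral_right)
  show "\<forall>K\<in>Pow {0..<6} - Pow {0, 1, 2}. wedge (dfun a b c (\<lambda>h. \<psi> h K) g) (mono K) L
      + \<psi> g K * dmono_list a b c (sorted_list_of_set K) L = 0"
    using H_Dol_p0_support[OF assms] by auto
qed auto

lemma mubar_matrix_injective:
  fixes u v :: complex
  assumes a: "a \<noteq> 0"
    and "u * (- 1 / (2 * of_real a)) + v * (of_real c / 4) = 0"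
    and "u * (of_real c / 4) + v * (1 / (2 * of_real a)) = 0"
  shows "u = 0" "v = 0"
proof -
  have "1 / (4 * a^2) + c^2 / 16 > 0"
    using a by (intro add_pos_nonneg) simp_all
  then have det: "of_real (1 / (4 * a^2) + c^2 / 16) \<noteq> (0::complex)"
    by (metis of_real_eq_0_iff less_irrefl)
  have "of_real (1 / (4 * a^2) + c^2 / 16) * u =
      (1 / (2 * of_real a)) * (- (u * (- 1 / (2 * of_real a)) + v * (of_real c / 4)))
      + (of_real c / 4) * (u * (of_real c / 4) + v * (1 / (2 * of_real a)))"
    using a by (simp add: field_simps power2_eq_square)
  then show "u = 0"
    using det assms(2,3) by simp
  have "of_real (1 / (4 * a^2) + c^2 / 16) * v =
      (of_real c / 4) * (u * (- 1 / (2 * of_real a)) + v * (of_real c / 4))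
      + (1 / (2 * of_real a)) * (u * (of_real c / 4) + v * (1 / (2 * of_real a)))"
    using a by (simp add: field_simps power2_eq_square)
  then show "v = 0"
    using det assms(2,3) by simp
qed

lemma H_Dol_p0_3:
  assumes a: "a \<noteq> 0" and c: "c \<noteq> 0"
  shows "H_Dol_p0 a b c a0 P 3 = {\<lambda>g. lzero}"
proof (intro equalityI subsetI)
  fix \<psi> assume H: "\<psi> \<in> H_Dol_p0 a b c a0 P 3"
  have z: "\<psi> h {} = 0" "\<psi> h {0} = 0" "\<psi> h {1} = 0" "\<psi> h {2} = 0"
    "\<psi> h {0,1} = 0" "\<psi> h {0,2} = 0" "\<psi> h {1,2} = 0" for h
    by (rule H_Dol_p0_bideg[OF H]; simp add: bideg_def)+
  have top: "\<psi> g {0,1,2} = 0" for g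
  proof -
    have "0 = dform a b c \<psi> g {0,2,3,4}"
      by (rule H_Dol_p0_mubar[OF H, symmetric]) (simp_all add: bideg_def)
    also have "\<dots> = \<psi> g {0,1,2} * (1 / (2 * of_real a))"
      unfolding H_Dol_p0_dform_eq[OF H] sum_Pow_012
      using a c by (simp add: z z[unfolded One_nat_def] wedge_mono_not_subset dmono_list_simps
          dtheta_mubar_coeffs dtheta_mubar_coeffs' dtheta_0)
    finally show ?thesis
      using a by simp
  qed
  have "\<psi> g K = 0" for g K
    using subset_012_cases[of K] z top H_Dol_p0_support[OF H] by blast
  then show "\<psi> \<in> {\<lambda>g. lzero}"
    by (auto simp: fun_eq_iff)
qed (simp add: zero_in_H_Dol_p0)

lemma H_Dol_p0_2:
  assumes a: "a \<noteq> 0" and c: "c \<noteq> 0"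
  shows "H_Dol_p0 a b c a0 P 2 = {\<lambda>g. lzero}"
proof (intro equalityI subsetI)
  fix \<psi> assume H: "\<psi> \<in> H_Dol_p0 a b c a0 P 2"
  have z: "\<psi> h {} = 0" "\<psi> h {0} = 0" "\<psi> h {1} = 0" "\<psi> h {2} = 0" "\<psi> h {0,1,2} = 0" for h
    by (rule H_Dol_p0_bideg[OF H]; simp add: bideg_def)+
  note dform_eq = H_Dol_p0_dform_eq[OF H]
  have mubar_eq: "dform a b c \<psi> g L = 0" if "L \<in> bideg 1 2" for g L
    using H_Dol_p0_mubar[OF H, of L g] that by simp
  have z2: "\<psi> g {0,1} = 0 \<and> \<psi> g {0,2} = 0 \<and> \<psi> g {1,2} = 0" for g
  proof -
    have e1: "\<psi> g {0,1} * (1 / (2 * of_real a)) - \<psi> g {0,2} * (of_real c / 4) = 0"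
      using mubar_eq[of "{0,3,4}" g] unfolding dform_eq sum_Pow_012 using a c
      by (simp add: bideg_def z z[unfolded One_nat_def] wedge_mono_not_subset dmono_list_simps
          dtheta_mubar_coeffs dtheta_mubar_coeffs' dtheta_0)
    have e2: "- \<psi> g {0,1} * (of_real c / 4) - \<psi> g {0,2} * (1 / (2 * of_real a)) = 0"
      using mubar_eq[of "{0,3,5}" g] unfolding dform_eq sum_Pow_012 using a c
      by (simp add: bideg_def z z[unfolded One_nat_def] wedge_mono_not_subset dmono_list_simps
          dtheta_mubar_coeffs dtheta_mubar_coeffs' dtheta_0)
    have e3: "\<psi> g {1,2} * (1 / (2 * of_real a)) = 0"
      using mubar_eq[of "{2,3,4}" g] unfolding dform_eq sum_Pow_012 using a c
      by (simp add: bideg_def z z[unfolded One_nat_def] wedge_mono_not_subset dmono_list_simps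
          dtheta_mubar_coeffs dtheta_mubar_coeffs' dtheta_0)
    have "\<psi> g {0,1} * (- 1 / (2 * of_real a)) + \<psi> g {0,2} * (of_real c / 4) = 0"
      using e1 a by (simp add: field_simps)
    moreover have "\<psi> g {0,1} * (of_real c / 4) + \<psi> g {0,2} * (1 / (2 * of_real a)) = 0"
      using e2 a by (simp add: field_simps) (metis add.left_inverse)
    ultimately show ?thesis
      using mubar_matrix_injective[OF a] e3 a by simp
  qed
  have "\<psi> g K = 0" for g K
    using subset_012_cases[of K] z z2 H_Dol_p0_support[OF H] by blast
  then show "\<psi> \<in> {\<lambda>g. lzero}"
    by (auto simp: fun_eq_iff)
qed (simp add: zero_in_H_Dol_p0)

section \<open>Partial derivatives in \<open>\<real>\<^sup>6\<close>\<close>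

lemma exhaust_6: "(x::6) = 1 \<or> x = 2 \<or> x = 3 \<or> x = 4 \<or> x = 5 \<or> x = 6"
proof (induct x)
  case (of_int z)
  then have "z = 0 \<or> z = 1 \<or> z = 2 \<or> z = 3 \<or> z = 4 \<or> z = 5"
    by fastforce
  then show ?case
    by auto
qed

lemma sum_UNIV_6: "sum f (UNIV::6 set) = f 1 + f 2 + f 3 + f 4 + f 5 + f 6"
proof -
  have UNIV_6: "UNIV = {1, 2, 3, 4, 5, 6::6}"
    using exhaust_6 by auto
  show ?thesis
    unfolding UNIV_6 by (simp add: ac_simps)
qed

lemma axis_line_nth: "(g + s *\<^sub>R axis j 1) $ k = (if k = j then g $ k + s else g $ k)"
  by (simp add: axis_def)

lemma axis_one_nth: "axis j (1::real) $ k = (if k = j then 1 else 0)"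
  by (simp add: axis_def)

lemma has_vector_derivative_line:
  fixes F :: "real^6 \<Rightarrow> complex"
  assumes "(F has_derivative D) (at (q + s0 *\<^sub>R v))"
  shows "((\<lambda>s. F (q + s *\<^sub>R v)) has_vector_derivative D v) (at s0)"
proof -
  have "((\<lambda>s. q + s *\<^sub>R v) has_derivative (\<lambda>s. s *\<^sub>R v)) (at s0)"
    by (auto intro!: derivative_eq_intros)
  then have "((\<lambda>s. F (q + s *\<^sub>R v)) has_derivative (\<lambda>s. D (s *\<^sub>R v))) (at s0)"
    using has_derivative_compose[of "\<lambda>s. q + s *\<^sub>R v" _ s0 UNIV F D] assms by (simp add: o_def)
  moreover have "(\<lambda>s. D (s *\<^sub>R v)) = (\<lambda>s. s *\<^sub>R D v)"
    using assms has_derivative_linear linear_scale by blast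
  ultimately show ?thesis
    by (simp add: has_vector_derivative_def)
qed

lemma partial_eq_derivative:
  fixes F :: "real^6 \<Rightarrow> complex"
  assumes "(F has_derivative D) (at p)"
  shows "partial j F p = D (axis j 1)"
  unfolding partial_def
  by (rule vector_derivative_at) (use has_vector_derivative_line[of F D p 0 "axis j 1"] assms in simp)

lemma has_vector_derivative_partial:
  fixes F :: "real^6 \<Rightarrow> complex"
  assumes "F differentiable (at (q + s0 *\<^sub>R axis j 1))"
  shows "((\<lambda>s. F (q + s *\<^sub>R axis j 1)) has_vector_derivative partial j F (q + s0 *\<^sub>R axis j 1)) (at s0)"
proof -
  obtain D where D: "(F has_derivative D) (at (q + s0 *\<^sub>R axis j 1))"
    using assms by (auto simp: differentiable_def)
  show ?thesis
    using has_vector_derivative_line[OF D] partial_eq_derivative[OF D] by simp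
qed

lemma has_vector_derivative_partial_0:
  fixes F :: "real^6 \<Rightarrow> complex"
  assumes "\<And>p. F differentiable (at p)"
  shows "((\<lambda>s. F (g + s *\<^sub>R axis j 1)) has_vector_derivative partial j F g) (at 0)"
  using has_vector_derivative_partial[of F g 0 j] assms by simp

lemma has_vector_derivative_bound:
  fixes f :: "real \<Rightarrow> complex"
  assumes "\<And>x. \<bar>x\<bar> \<le> \<bar>t\<bar> \<Longrightarrow> (f has_vector_derivative f' x) (at x)"
    and "\<And>x. \<bar>x\<bar> \<le> \<bar>t\<bar> \<Longrightarrow> norm (f' x) \<le> B"
  shows "norm (f t - f 0) \<le> B * \<bar>t\<bar>"
proof -
  have "norm (f t - f 0) \<le> B * norm (t - 0)"
  proof (rule differentiable_bound[of "{-\<bar>t\<bar>..\<bar>t\<bar>}" f "\<lambda>x h. h *\<^sub>R f' x"])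
    fix x :: real assume "x \<in> {-\<bar>t\<bar>..\<bar>t\<bar>}"
    then have x: "\<bar>x\<bar> \<le> \<bar>t\<bar>"
      by auto
    show "(f has_derivative (\<lambda>h. h *\<^sub>R f' x)) (at x within {-\<bar>t\<bar>..\<bar>t\<bar>})"
      using assms(1)[OF x] by (simp add: has_vector_derivative_def has_derivative_at_withinI)
    have "onorm (\<lambda>h::real. h *\<^sub>R f' x) = norm (f' x)"
      using onorm_scaleR_left[OF bounded_linear_ident, of "f' x"] by (simp add: onorm_id)
    then show "onorm (\<lambda>h::real. h *\<^sub>R f' x) \<le> B"
      using assms(2)[OF x] by simp
  qed auto
  then show ?thesis
    by simp
qed

text \<open>For \<open>F\<close> with continuous mixed partial \<open>\<partial>\<^sub>j\<partial>\<^sub>iF\<close> at \<open>g\<close>, the second difference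
  quotient of \<open>F\<close> in the directions \<open>i, j\<close> tends to \<open>\<partial>\<^sub>j\<partial>\<^sub>iF g\<close>; as the second
  difference is symmetric in \<open>i, j\<close>, this yields Schwarz's theorem below.\<close>
lemma second_difference_approx:
  fixes F :: "real^6 \<Rightarrow> complex"
  assumes dF: "\<And>p. F differentiable (at p)" and dG: "\<And>p. partial i F differentiable (at p)"
    and cont: "continuous (at g) (partial j (partial i F))" and e: "e > 0"
  shows "\<exists>\<delta>>0. \<forall>s t. \<bar>s\<bar> \<le> \<delta> \<longrightarrow> \<bar>t\<bar> \<le> \<delta> \<longrightarrow>
     norm (F (g + s *\<^sub>R axis i 1 + t *\<^sub>R axis j 1) - F (g + s *\<^sub>R axis i 1) - F (g + t *\<^sub>R axis j 1) + F g
           - (s * t) *\<^sub>R partial j (partial i F) g) \<le> e * \<bar>t\<bar> * \<bar>s\<bar>"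
proof -
  define G where "G = partial i F"
  define D where "D = partial j G g"
  define u :: "real^6" where "u = axis i 1"
  define v :: "real^6" where "v = axis j 1"
  have norm_uv: "norm u = 1" "norm v = 1"
    by (simp_all add: u_def v_def)
  obtain d where d: "d > 0" "\<And>p. dist p g < d \<Longrightarrow> dist (partial j G p) D < e"
    using cont e unfolding continuous_at_eps_delta G_def D_def by blast
  define \<delta> where "\<delta> = d / 3"
  have \<delta>: "\<delta> > 0"
    using d by (simp add: \<delta>_def)
  have near: "norm (partial j G (g + x *\<^sub>R u + y *\<^sub>R v) - D) \<le> e" if "\<bar>x\<bar> \<le> \<delta>" "\<bar>y\<bar> \<le> \<delta>" for x y
  proof -
    have "norm (x *\<^sub>R u + y *\<^sub>R v) \<le> \<bar>x\<bar> + \<bar>y\<bar>"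
      using norm_triangle_ineq[of "x *\<^sub>R u" "y *\<^sub>R v"] norm_uv by simp
    also have "\<dots> < d"
      using that d \<delta>_def by simp
    finally have "dist (g + x *\<^sub>R u + y *\<^sub>R v) g < d"
      by (simp add: dist_norm add.assoc)
    then show ?thesis
      using d(2) by (simp add: dist_norm less_imp_le)
  qed
  have inner: "norm (G (g + x *\<^sub>R u + t *\<^sub>R v) - G (g + x *\<^sub>R u) - t *\<^sub>R D) \<le> e * \<bar>t\<bar>"
    if "\<bar>x\<bar> \<le> \<delta>" "\<bar>t\<bar> \<le> \<delta>" for x t
  proof -
    have "norm ((\<lambda>y. G (g + x *\<^sub>R u + y *\<^sub>R v) - y *\<^sub>R D) t - (\<lambda>y. G (g + x *\<^sub>R u + y *\<^sub>R v) - y *\<^sub>R D) 0)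
        \<le> e * \<bar>t\<bar>"
    proof (rule has_vector_derivative_bound)
      fix y assume y: "\<bar>y\<bar> \<le> \<bar>t\<bar>"
      show "((\<lambda>y. G (g + x *\<^sub>R u + y *\<^sub>R v) - y *\<^sub>R D) has_vector_derivative
              partial j G (g + x *\<^sub>R u + y *\<^sub>R v) - D) (at y)"
        unfolding v_def
        by (intro has_vector_derivative_diff has_vector_derivative_partial)
          (auto simp: G_def dG has_vector_derivative_def intro!: derivative_eq_intros)
      show "norm (partial j G (g + x *\<^sub>R u + y *\<^sub>R v) - D) \<le> e"
        using near[of x y] that y by simp
    qed
    then show ?thesis
      by (simp add: algebra_simps)
  qed
  show ?thesis
  proof (intro exI[of _ \<delta>] conjI allI impI \<delta>)
    fix s t assume s: "\<bar>s\<bar> \<le> \<delta>" and t: "\<bar>t\<bar> \<le> \<delta>"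
    define \<phi> where "\<phi> = (\<lambda>x. F ((g + t *\<^sub>R v) + x *\<^sub>R u) - F (g + x *\<^sub>R u) - (x * t) *\<^sub>R D)"
    have "norm (\<phi> s - \<phi> 0) \<le> (e * \<bar>t\<bar>) * \<bar>s\<bar>"
    proof (rule has_vector_derivative_bound)
      fix x assume x: "\<bar>x\<bar> \<le> \<bar>s\<bar>"
      show "(\<phi> has_vector_derivative
          (partial i F ((g + t *\<^sub>R v) + x *\<^sub>R u) - partial i F (g + x *\<^sub>R u) - t *\<^sub>R D)) (at x)"
        unfolding \<phi>_def u_def
        using has_vector_derivative_partial[of F g x i, OF dF]
        by (intro has_vector_derivative_diff has_vector_derivative_partial dF)
          (auto intro!: derivative_eq_intros simp: has_vector_derivative_def)
      have swap: "(g + t *\<^sub>R v) + x *\<^sub>R u = g + x *\<^sub>R u + t *\<^sub>R v"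
        by (simp add: algebra_simps)
      show "norm (partial i F ((g + t *\<^sub>R v) + x *\<^sub>R u) - partial i F (g + x *\<^sub>R u) - t *\<^sub>R D) \<le> e * \<bar>t\<bar>"
        unfolding swap using inner[of x t] x s t by (simp add: G_def)
    qed
    moreover have "\<phi> s - \<phi> 0 =
        F (g + s *\<^sub>R u + t *\<^sub>R v) - F (g + s *\<^sub>R u) - F (g + t *\<^sub>R v) + F g - (s * t) *\<^sub>R D"
      by (simp add: \<phi>_def algebra_simps)
    ultimately show "norm (F (g + s *\<^sub>R axis i 1 + t *\<^sub>R axis j 1) - F (g + s *\<^sub>R axis i 1)
        - F (g + t *\<^sub>R axis j 1) + F g - (s * t) *\<^sub>R partial j (partial i F) g) \<le> e * \<bar>t\<bar> * \<bar>s\<bar>"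
      by (simp add: u_def v_def D_def G_def)
  qed
qed

lemma partial_commute:
  fixes F :: "real^6 \<Rightarrow> complex"
  assumes dF: "\<And>p. F differentiable (at p)"
    and dGi: "\<And>p. partial i F differentiable (at p)" and dGj: "\<And>p. partial j F differentiable (at p)"
    and ci: "continuous (at g) (partial j (partial i F))" and cj: "continuous (at g) (partial i (partial j F))"
  shows "partial j (partial i F) g = partial i (partial j F) g"
proof -
  define D1 where "D1 = partial j (partial i F) g"
  define D2 where "D2 = partial i (partial j F) g"
  have close: "norm (D1 - D2) \<le> 2 * e" if e: "e > 0" for e
  proof -
    obtain d1 where d1: "d1 > 0" "\<And>s t. \<bar>s\<bar> \<le> d1 \<Longrightarrow> \<bar>t\<bar> \<le> d1 \<Longrightarrow>
       norm (F (g + s *\<^sub>R axis i 1 + t *\<^sub>R axis j 1) - F (g + s *\<^sub>R axis i 1) - F (g + t *\<^sub>R axis j 1) + F g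
           - (s * t) *\<^sub>R D1) \<le> e * \<bar>t\<bar> * \<bar>s\<bar>"
      using second_difference_approx[OF dF dGi ci e] unfolding D1_def by blast
    obtain d2 where d2: "d2 > 0" "\<And>s t. \<bar>s\<bar> \<le> d2 \<Longrightarrow> \<bar>t\<bar> \<le> d2 \<Longrightarrow>
       norm (F (g + s *\<^sub>R axis j 1 + t *\<^sub>R axis i 1) - F (g + s *\<^sub>R axis j 1) - F (g + t *\<^sub>R axis i 1) + F g
           - (s * t) *\<^sub>R D2) \<le> e * \<bar>t\<bar> * \<bar>s\<bar>"
      using second_difference_approx[OF dF dGj cj e] unfolding D2_def by blast
    define r where "r = min d1 d2"
    have r: "r > 0" "\<bar>r\<bar> \<le> d1" "\<bar>r\<bar> \<le> d2"
      using d1 d2 by (auto simp: r_def)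
    define Q where "Q = F (g + r *\<^sub>R axis i 1 + r *\<^sub>R axis j 1) - F (g + r *\<^sub>R axis i 1)
      - F (g + r *\<^sub>R axis j 1) + F g"
    have q1: "norm (Q - (r * r) *\<^sub>R D1) \<le> e * r * r"
      using d1(2)[OF r(2) r(2)] r by (simp add: Q_def)
    have "F (g + r *\<^sub>R axis j 1 + r *\<^sub>R axis i 1) = F (g + r *\<^sub>R axis i 1 + r *\<^sub>R axis j 1)"
      by (simp add: algebra_simps)
    then have q2: "norm (Q - (r * r) *\<^sub>R D2) \<le> e * r * r"
      using d2(2)[OF r(3) r(3)] r by (simp add: Q_def algebra_simps)
    have "norm ((r * r) *\<^sub>R (D1 - D2)) = norm ((Q - (r * r) *\<^sub>R D2) - (Q - (r * r) *\<^sub>R D1))"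
      by (simp add: algebra_simps)
    also have "\<dots> \<le> norm (Q - (r * r) *\<^sub>R D2) + norm (Q - (r * r) *\<^sub>R D1)"
      by (rule norm_triangle_ineq4)
    also have "\<dots> \<le> (r * r) * (2 * e)"
      using q1 q2 by (simp add: algebra_simps)
    finally have "(r * r) * norm (D1 - D2) \<le> (r * r) * (2 * e)"
      using r by simp
    then show ?thesis
      using r by (simp add: mult_le_cancel_left_pos)
  qed
  have "norm (D1 - D2) = 0"
  proof (rule ccontr)
    assume "norm (D1 - D2) \<noteq> 0"
    then show False
      using close[of "norm (D1 - D2) / 4"] by simp
  qed
  then show ?thesis
    by (simp add: D1_def D2_def)
qed

lemma smoothD:
  assumes "smooth f"
  shows "\<And>g. f differentiable (at g)" and "\<And>j. smooth (partial j f)"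
  using assms by (auto elim: smooth.cases)

lemma partial_commute_smooth:
  assumes "smooth f"
  shows "partial j (partial k f) p = partial k (partial j f) p"
proof (rule partial_commute)
  have "\<And>k j p. partial j (partial k f) differentiable (at p)"
    using smoothD(1)[OF smoothD(2)[OF smoothD(2)[OF assms]]] by blast
  then show "continuous (at p) (partial j (partial k f))" "continuous (at p) (partial k (partial j f))"
    using differentiable_imp_continuous_within by blast+
qed (use smoothD[OF assms] smoothD(1)[OF smoothD(2)[OF assms]] in blast)+

lemma vector_derivative_of_vanishing:
  fixes Q :: "real^6 \<Rightarrow> complex"
  assumes "\<And>p. Q p = 0" and "((\<lambda>s. Q (g + s *\<^sub>R axis j 1)) has_vector_derivative D) (at 0)"
  shows "D = 0"
proof -
  have "((\<lambda>s. Q (g + s *\<^sub>R axis j 1)) has_vector_derivative 0) (at 0)"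
    using assms(1) by simp
  then show ?thesis
    using assms(2) vector_derivative_unique_at by blast
qed

lemma const_along_axis:
  fixes f :: "real^6 \<Rightarrow> complex"
  assumes "\<And>p. f differentiable (at p)" and "\<And>p. partial k f p = 0"
  shows "f (q + t *\<^sub>R axis k 1) = f q"
proof -
  have "norm (f (q + t *\<^sub>R axis k 1) - f (q + 0 *\<^sub>R axis k 1)) \<le> 0 * \<bar>t\<bar>"
    by (rule has_vector_derivative_bound[of _ "\<lambda>s. f (q + s *\<^sub>R axis k 1)"])
      (use has_vector_derivative_partial[of f q _ k] assms in auto)
  then show ?thesis
    by simp
qed

section \<open>dbar-closed functions on X are constant\<close>

text \<open>Nonzero multiples of the coefficients of the conjugates of \<open>\<phi>\<^sup>1, \<phi>\<^sup>2, \<phi>\<^sup>3\<close> in \<open>df\<close>, written in the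
  coordinates \<open>(t,x,y\<^sub>1,y\<^sub>2,z\<^sub>1,z\<^sub>2)\<close> (axes 1 to 6).\<close>

definition dbar_coord1 :: "real \<Rightarrow> (real^6 \<Rightarrow> complex) \<Rightarrow> real^6 \<Rightarrow> complex" where
  "dbar_coord1 a f g = partial 1 f g + \<i> * of_real a * partial 2 f g"

definition dbar_coord2 :: "real \<Rightarrow> (real^6 \<Rightarrow> complex) \<Rightarrow> real^6 \<Rightarrow> complex" where
  "dbar_coord2 c f g = of_real (exp (g$1)) * partial 3 f g
     + \<i> * of_real c * (of_real (exp (- g$1)) * (of_real (g$2) * partial 4 f g + partial 6 f g))"

definition dbar_coord3 :: "real \<Rightarrow> real \<Rightarrow> (real^6 \<Rightarrow> complex) \<Rightarrow> real^6 \<Rightarrow> complex" where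
  "dbar_coord3 b c f g = (\<i> * of_real c * of_real (g$2) - \<i> * of_real b) * of_real (exp (g$1)) * partial 3 f g
     + of_real (exp (- g$1)) * partial 4 f g + \<i> * of_real c * (of_real (exp (g$1)) * partial 5 f g)"

lemma dfun_apply: "finite K \<Longrightarrow> dfun a b c f g K = (\<Sum>j\<in>UNIV. partial j f g * to_theta a b c (dcoord g j) K)"
  by (simp add: dfun_def to_theta_def ext_map_lsum ext_map_lscale)

lemma exp_minus_of_real: "exp (- complex_of_real t) = complex_of_real (exp (- t))"
  by (metis exp_of_real of_real_minus)

lemma dbar_coords_eq_0:
  assumes a: "a \<noteq> 0" and c: "c \<noteq> 0"
  shows "dfun a b c f g {3} = 0 \<Longrightarrow> dbar_coord1 a f g = 0"
    and "dfun a b c f g {4} = 0 \<Longrightarrow> dbar_coord2 c f g = 0"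
    and "dfun a b c f g {5} = 0 \<Longrightarrow> dbar_coord3 b c f g = 0"
proof -
  note expand = dfun_apply sum_UNIV_6 dcoord_def Let_def to_theta_def ext_map_ladd ext_map_lscale ext_map_gen
  assume "dfun a b c f g {3} = 0"
  then have "partial 1 f g / (2 * of_real a) + partial 2 f g * \<i> / 2 = 0"
    by (simp add: expand) (simp add: e_in_theta_def gen_def)
  then show "dbar_coord1 a f g = 0"
    using a by (simp add: dbar_coord1_def field_simps)
next
  note expand = dfun_apply sum_UNIV_6 dcoord_def Let_def to_theta_def ext_map_ladd ext_map_lscale ext_map_gen
  assume "dfun a b c f g {4} = 0"
  then have "partial 3 f g * of_real (exp (g$1)) / (2 * of_real c)
      + partial 4 f g * (of_real (g$2) * of_real (exp (- g$1)) * \<i>) / 2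
      + partial 6 f g * (of_real (exp (- g$1)) * \<i>) / 2 = 0"
    by (simp add: expand) (simp add: e_in_theta_def gen_def exp_of_real exp_minus_of_real)
  moreover have "dbar_coord2 c f g = (2 * of_real c) * (partial 3 f g * of_real (exp (g$1)) / (2 * of_real c)
      + partial 4 f g * (of_real (g$2) * of_real (exp (- g$1)) * \<i>) / 2
      + partial 6 f g * (of_real (exp (- g$1)) * \<i>) / 2)"
    using c by (simp add: dbar_coord2_def field_simps)
  ultimately show "dbar_coord2 c f g = 0"
    by simp
next
  note expand = dfun_apply sum_UNIV_6 dcoord_def Let_def to_theta_def ext_map_ladd ext_map_lscale ext_map_gen
  assume "dfun a b c f g {5} = 0"
  then have "partial 3 f g * (of_real (exp (g$1)) * of_real b / (of_real c * 2 * \<i>)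
        + of_real (g$2) * of_real (exp (g$1)) * \<i> / 2)
      + partial 4 f g * of_real (exp (- g$1)) / (2 * of_real c)
      + partial 5 f g * (of_real (exp (g$1)) * \<i>) / 2 = 0"
    by (simp add: expand) (simp add: e_in_theta_def gen_def exp_of_real exp_minus_of_real)
  moreover have "dbar_coord3 b c f g = (2 * of_real c) * (partial 3 f g * (of_real (exp (g$1)) * of_real b / (of_real c * 2 * \<i>)
        + of_real (g$2) * of_real (exp (g$1)) * \<i> / 2)
      + partial 4 f g * of_real (exp (- g$1)) / (2 * of_real c)
      + partial 5 f g * (of_real (exp (g$1)) * \<i>) / 2)"
    using c by (simp add: dbar_coord3_def field_simps)
  ultimately show "dbar_coord3 b c f g = 0"
    by simp
qed

lemma dbar_coord1_partial:
  assumes sm: "smooth f" and W: "\<And>g. dbar_coord1 a f g = 0"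
  shows "dbar_coord1 a (partial k f) g = 0"
proof -
  have dP: "\<And>p. partial j f differentiable (at p)" for j
    using smoothD(1)[OF smoothD(2)[OF sm]] .
  have "partial k (partial 1 f) g + \<i> * of_real a * partial k (partial 2 f) g = 0"
    by (rule vector_derivative_of_vanishing[where Q="dbar_coord1 a f" and g=g and j=k, OF W])
      (unfold dbar_coord1_def, (rule derivative_eq_intros has_vector_derivative_partial_0[OF dP] | simp)+)
  then show ?thesis
    by (simp add: dbar_coord1_def partial_commute_smooth[OF sm, of k])
qed

text \<open>Differentiating \<open>dbar_coord2 c f = 0\<close> along \<open>\<partial>\<^sub>t + i a \<partial>\<^sub>x\<close>, the second-order terms cancel by
  \<open>dbar_coord1 a (\<partial>\<^sub>k f) = 0\<close>; what survives is a new first-order equation, coming from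
  the bracket of the corresponding (0,1)-vector fields.\<close>
lemma dbar_coord2_bracket:
  assumes sm: "smooth f" and W: "\<And>g. dbar_coord1 a f g = 0" and A: "\<And>g. dbar_coord2 c f g = 0"
  shows "of_real (exp (g$1)) * partial 3 f g
      - \<i> * of_real c * of_real (exp (- g$1)) * (of_real (g$2) * partial 4 f g + partial 6 f g)
      - of_real a * of_real c * of_real (exp (- g$1)) * partial 4 f g = 0"
proof -
  have dP: "\<And>p. partial j f differentiable (at p)" for j
    using smoothD(1)[OF smoothD(2)[OF sm]] .
  note vds = has_vector_derivative_partial_0[OF dP]
  define E where "E = complex_of_real (exp (g$1))"
  define Ei where "Ei = complex_of_real (exp (- g$1))"
  define x where "x = complex_of_real (g$2)"
  define P where "P = (\<lambda>k. partial k f g)"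
  define Q where "Q = (\<lambda>j k. partial j (partial k f) g)"
  have A1: "E * P 3 + E * Q 1 3 + \<i> * of_real c * (- Ei * (x * P 4 + P 6) + Ei * (x * Q 1 4 + Q 1 6)) = 0"
    unfolding E_def Ei_def x_def P_def Q_def
    by (rule vector_derivative_of_vanishing[where Q="dbar_coord2 c f" and g=g and j=1, OF A])
      (simp add: dbar_coord2_def axis_line_nth, (rule derivative_eq_intros vds | simp add: axis_one_nth)+,
        (simp add: algebra_simps)?)
  have A2: "E * Q 2 3 + \<i> * of_real c * (Ei * (P 4 + x * Q 2 4 + Q 2 6)) = 0"
    unfolding E_def Ei_def x_def P_def Q_def
    by (rule vector_derivative_of_vanishing[where Q="dbar_coord2 c f" and g=g and j=2, OF A])
      (simp add: dbar_coord2_def axis_line_nth, (rule derivative_eq_intros vds | simp add: axis_one_nth)+,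
        (simp add: algebra_simps)?)
  have Wq: "Q 1 k + \<i> * of_real a * Q 2 k = 0" for k
    using dbar_coord1_partial[OF sm W, of k g] by (simp add: dbar_coord1_def Q_def)
  have "E * P 3 - \<i> * of_real c * Ei * (x * P 4 + P 6) - of_real a * of_real c * Ei * P 4 =
      (E * P 3 + E * Q 1 3 + \<i> * of_real c * (- Ei * (x * P 4 + P 6) + Ei * (x * Q 1 4 + Q 1 6)))
      + \<i> * of_real a * (E * Q 2 3 + \<i> * of_real c * (Ei * (P 4 + x * Q 2 4 + Q 2 6)))
      - E * (Q 1 3 + \<i> * of_real a * Q 2 3) - \<i> * of_real c * Ei * x * (Q 1 4 + \<i> * of_real a * Q 2 4)
      - \<i> * of_real c * Ei * (Q 1 6 + \<i> * of_real a * Q 2 6)"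
    by (simp add: algebra_simps)
  also have "\<dots> = 0"
    using A1 A2 Wq[of 3] Wq[of 4] Wq[of 6] by simp
  finally show ?thesis
    by (simp add: E_def Ei_def x_def P_def)
qed

lemma dbar_coord3_bracket:
  assumes sm: "smooth f" and W: "\<And>g. dbar_coord1 a f g = 0" and B: "\<And>g. dbar_coord3 b c f g = 0"
  shows "(\<i> * of_real c * of_real (g$2) - \<i> * of_real b - of_real a * of_real c) * of_real (exp (g$1)) * partial 3 f g
      - of_real (exp (- g$1)) * partial 4 f g + \<i> * of_real c * of_real (exp (g$1)) * partial 5 f g = 0"
proof -
  have dP: "\<And>p. partial j f differentiable (at p)" for j
    using smoothD(1)[OF smoothD(2)[OF sm]] .
  note vds = has_vector_derivative_partial_0[OF dP]
  define E where "E = complex_of_real (exp (g$1))"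
  define Ei where "Ei = complex_of_real (exp (- g$1))"
  define x where "x = complex_of_real (g$2)"
  define P where "P = (\<lambda>k. partial k f g)"
  define Q where "Q = (\<lambda>j k. partial j (partial k f) g)"
  define m where "m = \<i> * of_real c * x - \<i> * of_real b"
  have B1: "m * (E * P 3 + E * Q 1 3) - Ei * P 4 + Ei * Q 1 4 + \<i> * of_real c * (E * P 5 + E * Q 1 5) = 0"
    unfolding E_def Ei_def x_def P_def Q_def m_def
    by (rule vector_derivative_of_vanishing[where Q="dbar_coord3 b c f" and g=g and j=1, OF B])
      (simp add: dbar_coord3_def axis_line_nth, (rule derivative_eq_intros vds | simp add: axis_one_nth)+,
        (simp add: algebra_simps)?)
  have B2: "\<i> * of_real c * E * P 3 + m * E * Q 2 3 + Ei * Q 2 4 + \<i> * of_real c * (E * Q 2 5) = 0"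
    unfolding E_def Ei_def x_def P_def Q_def m_def
    by (rule vector_derivative_of_vanishing[where Q="dbar_coord3 b c f" and g=g and j=2, OF B])
      (simp add: dbar_coord3_def axis_line_nth, (rule derivative_eq_intros vds | simp add: axis_one_nth)+,
        (simp add: algebra_simps)?)
  have Wq: "Q 1 k + \<i> * of_real a * Q 2 k = 0" for k
    using dbar_coord1_partial[OF sm W, of k g] by (simp add: dbar_coord1_def Q_def)
  have "(m - of_real a * of_real c) * E * P 3 - Ei * P 4 + \<i> * of_real c * E * P 5 =
      (m * (E * P 3 + E * Q 1 3) - Ei * P 4 + Ei * Q 1 4 + \<i> * of_real c * (E * P 5 + E * Q 1 5))
      + \<i> * of_real a * (\<i> * of_real c * E * P 3 + m * E * Q 2 3 + Ei * Q 2 4 + \<i> * of_real c * (E * Q 2 5))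
      - m * E * (Q 1 3 + \<i> * of_real a * Q 2 3) - Ei * (Q 1 4 + \<i> * of_real a * Q 2 4)
      - \<i> * of_real c * E * (Q 1 5 + \<i> * of_real a * Q 2 5)"
    by (simp add: algebra_simps)
  also have "\<dots> = 0"
    using B1 B2 Wq[of 3] Wq[of 4] Wq[of 5] by simp
  finally show ?thesis
    by (simp add: E_def Ei_def x_def P_def m_def)
qed


lemma transverse_partials_vanish:
  assumes sm: "smooth f" and c: "c \<noteq> 0" and W: "\<And>g. dbar_coord1 a f g = 0"
    and A: "\<And>g. dbar_coord2 c f g = 0" and B: "\<And>g. dbar_coord3 b c f g = 0"
    and k: "k \<in> {3,4,5,6}"
  shows "partial k f g = 0"
proof -
  define E where "E = complex_of_real (exp (g$1))"
  define Ei where "Ei = complex_of_real (exp (- g$1))"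
  define x where "x = complex_of_real (g$2)"
  define u3 where "u3 = E * partial 3 f g"
  define u4 where "u4 = Ei * partial 4 f g"
  define u5 where "u5 = E * partial 5 f g"
  define u6 where "u6 = Ei * partial 6 f g"
  define ac where "ac = complex_of_real a * complex_of_real c"
  have eA: "u3 + \<i> * of_real c * x * u4 + \<i> * of_real c * u6 = 0"
    using A[of g] by (simp add: dbar_coord2_def E_def Ei_def x_def u3_def u4_def u6_def algebra_simps)
  have eA': "u3 - \<i> * of_real c * x * u4 - \<i> * of_real c * u6 - ac * u4 = 0"
    using dbar_coord2_bracket[OF sm W A, of g]
    by (simp add: E_def Ei_def x_def u3_def u4_def u6_def ac_def algebra_simps)
  have eB: "(\<i> * of_real c * x - \<i> * of_real b) * u3 + u4 + \<i> * of_real c * u5 = 0"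
    using B[of g] by (simp add: dbar_coord3_def E_def Ei_def x_def u3_def u4_def u5_def algebra_simps)
  have eB': "(\<i> * of_real c * x - \<i> * of_real b - ac) * u3 - u4 + \<i> * of_real c * u5 = 0"
    using dbar_coord3_bracket[OF sm W B, of g]
    by (simp add: E_def Ei_def x_def u3_def u4_def u5_def ac_def algebra_simps)
  have s1: "2 * u3 - ac * u4 = 0"
    using eA eA' by (simp add: algebra_simps)
  have s2: "ac * u3 + 2 * u4 = 0"
  proof -
    have "ac * u3 + 2 * u4 = ((\<i> * of_real c * x - \<i> * of_real b) * u3 + u4 + \<i> * of_real c * u5)
        - ((\<i> * of_real c * x - \<i> * of_real b - ac) * u3 - u4 + \<i> * of_real c * u5)"
      by (simp add: algebra_simps)
    then show ?thesis
      using eB eB' by simp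
  qed
  have "(4 + ac * ac) * u3 = 2 * (2 * u3 - ac * u4) + ac * (ac * u3 + 2 * u4)"
    by (simp add: algebra_simps)
  moreover have "4 + ac * ac \<noteq> 0"
  proof -
    have "4 + ac * ac = complex_of_real (4 + (a * c) * (a * c))"
      by (simp add: ac_def)
    moreover have "4 + (a * c) * (a * c) > 0"
      by (simp add: add_pos_nonneg)
    ultimately show ?thesis
      by (metis of_real_eq_0_iff less_irrefl)
  qed
  ultimately have u3: "u3 = 0"
    using s1 s2 by simp
  then have u4: "u4 = 0"
    using s2 by simp
  have u6: "u6 = 0"
    using eA u3 u4 c by simp
  have u5: "u5 = 0"
    using eB u3 u4 c by simp
  have "E \<noteq> 0" "Ei \<noteq> 0"
    by (simp_all add: E_def Ei_def)
  then show ?thesis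
    using k u3 u4 u5 u6 by (auto simp: u3_def u4_def u5_def u6_def)
qed

definition tx_point :: "real \<Rightarrow> real \<Rightarrow> real^6" where
  "tx_point t x = (\<chi> i. if i = 1 then t else if i = 2 then x else 0)"

lemma tx_point_nth [simp]: "tx_point t x $ 1 = t" "tx_point t x $ 2 = x"
  by (simp_all add: tx_point_def)

lemma continuous_on_tx_point: "continuous_on UNIV (\<lambda>p::real \<times> real. tx_point (fst p) (snd p))"
  unfolding tx_point_def
proof (intro continuous_on_vec_lambda)
  fix i :: 6
  show "continuous_on UNIV (\<lambda>p::real \<times> real. if i = 1 then fst p else if i = 2 then snd p else 0)"
    by (cases "i = 1"; cases "i = 2") (auto intro!: continuous_intros)
qed

lemma tx_point_decomp:
  "g = tx_point (g$1) (g$2) + g$3 *\<^sub>R axis 3 1 + g$4 *\<^sub>R axis 4 1 + g$5 *\<^sub>R axis 5 1 + g$6 *\<^sub>R axis 6 1"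
  unfolding vec_eq_iff
proof
  fix i :: 6
  show "g $ i = (tx_point (g$1) (g$2) + g$3 *\<^sub>R axis 3 1 + g$4 *\<^sub>R axis 4 1
      + g$5 *\<^sub>R axis 5 1 + g$6 *\<^sub>R axis 6 1) $ i"
    using exhaust_6[of i] by (auto simp: tx_point_def axis_def)
qed

lemma eq_at_tx_point:
  fixes f :: "real^6 \<Rightarrow> complex"
  assumes "\<And>p. f differentiable (at p)" and "\<And>k p. k \<in> {3,4,5,6} \<Longrightarrow> partial k f p = 0"
  shows "f g = f (tx_point (g$1) (g$2))"
proof -
  have "f g = f (tx_point (g$1) (g$2) + g$3 *\<^sub>R axis 3 1 + g$4 *\<^sub>R axis 4 1 + g$5 *\<^sub>R axis 5 1
      + g$6 *\<^sub>R axis 6 1)"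
    using tx_point_decomp by metis
  also have "\<dots> = f (tx_point (g$1) (g$2))"
    using const_along_axis[OF assms(1)] assms(2) by simp
  finally show ?thesis .
qed

lemma tx_point_in_Lattice: "tx_point a0 0 \<in> Lattice a0 P" "tx_point 0 1 \<in> Lattice a0 P"
  unfolding Lattice_def
  by (rule CollectI, rule exI[of _ 1], rule exI[of _ 0]; auto simp: tx_point_def intro!: exI[of _ 0])
    (rule CollectI, rule exI[of _ 0], rule exI[of _ 1]; auto simp: tx_point_def intro!: exI[of _ 0])

lemma periodic_shift_int:
  fixes h :: "real \<Rightarrow> complex"
  assumes "\<And>t. h (p + t) = h t"
  shows "h (t + real_of_int n * p) = h t"
proof -
  have pos: "h (t + real m * p) = h t" for m :: nat and t
  proof (induction m arbitrary: t)
    case (Suc m)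
    have "h (t + real (Suc m) * p) = h (p + (t + real m * p))"
      by (simp add: algebra_simps)
    also have "\<dots> = h (t + real m * p)"
      by (rule assms)
    finally show ?case
      using Suc by simp
  qed simp
  show ?thesis
  proof (cases "n \<ge> 0")
    case True
    then obtain m where "n = int m"
      by (metis nonneg_eq_int)
    then show ?thesis
      using pos by simp
  next
    case False
    then obtain m where m: "n = - int m"
      by (metis le_cases neg_0_le_iff_le nonneg_eq_int minus_minus)
    have "h t = h ((t - real m * p) + real m * p)"
      by simp
    also have "\<dots> = h (t - real m * p)"
      by (rule pos)
    finally show ?thesis
      using m by simp
  qed
qed

lemma doubly_periodic_bounded:
  fixes h :: "real \<Rightarrow> real \<Rightarrow> complex"
  assumes cont: "continuous_on UNIV (\<lambda>p. h (fst p) (snd p))" and a0: "a0 > 0"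
    and p1: "\<And>t x. h (a0 + t) x = h t x" and p2: "\<And>t x. h t (1 + x) = h t x"
  shows "\<exists>M. \<forall>t x. norm (h t x) \<le> M"
proof -
  have "compact ((\<lambda>p. h (fst p) (snd p)) ` cbox (0, 0) (a0, 1))"
    by (rule compact_continuous_image[OF continuous_on_subset[OF cont] compact_cbox]) simp
  then obtain M where M: "\<And>y. y \<in> (\<lambda>p. h (fst p) (snd p)) ` cbox (0, 0) (a0, 1) \<Longrightarrow> norm y \<le> M"
    using compact_imp_bounded bounded_iff by metis
  have "norm (h t x) \<le> M" for t x
  proof -
    define t' where "t' = t + real_of_int (- \<lfloor>t / a0\<rfloor>) * a0"
    define x' where "x' = x + real_of_int (- \<lfloor>x\<rfloor>) * 1"
    have ht: "h t' y = h t y" for y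
      unfolding t'_def by (rule periodic_shift_int[of "\<lambda>t. h t y"]) (rule p1)
    have hx: "h s x' = h s x" for s
      unfolding x'_def by (rule periodic_shift_int[of "h s"]) (rule p2)
    have "real_of_int \<lfloor>t / a0\<rfloor> * a0 \<le> t" "t < (real_of_int \<lfloor>t / a0\<rfloor> + 1) * a0"
      using floor_divide_lower[OF a0] floor_divide_upper[OF a0] by auto
    then have "0 \<le> t'" "t' \<le> a0"
      by (simp_all add: t'_def algebra_simps)
    moreover have "0 \<le> x'" "x' \<le> 1"
      unfolding x'_def by linarith+
    ultimately have "(t', x') \<in> cbox (0, 0) (a0, 1)"
      by (simp add: cbox_Pair_iff)
    then have "norm (h t' x') \<le> M"
      using M by force
    then show ?thesis
      using ht hx by simp
  qed
  then show ?thesis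
    by blast
qed


text \<open>Along \<open>(t,x) = (-Im w / a, Re w)\<close>, the equation \<open>\<partial>\<^sub>t f + i a \<partial>\<^sub>x f = 0\<close> is the
  Cauchy--Riemann equation in \<open>w\<close>.\<close>
lemma has_field_derivative_tx_point:
  fixes f :: "real^6 \<Rightarrow> complex"
  assumes a: "a \<noteq> 0" and df: "\<And>p. f differentiable (at p)" and W: "\<And>g. dbar_coord1 a f g = 0"
  defines "L \<equiv> \<lambda>w::complex. tx_point (- Im w / a) (Re w)"
  shows "((\<lambda>w. f (L w)) has_field_derivative partial 2 f (L z)) (at z)"
proof -
  have L_decomp: "L w = (- Im w / a) *\<^sub>R axis 1 1 + Re w *\<^sub>R axis 2 1" for w
    unfolding vec_eq_iff L_def tx_point_def
  proof
    fix i :: 6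
    show "(\<chi> i. if i = 1 then - Im w / a else if i = 2 then Re w else 0) $ i
        = ((- Im w / a) *\<^sub>R axis 1 1 + Re w *\<^sub>R axis 2 1) $ i"
      using exhaust_6[of i] by (auto simp: axis_def)
  qed
  have "linear L"
    unfolding L_def tx_point_def by (intro linearI) (auto simp: vec_eq_iff diff_divide_distrib)
  then have L_lin: "bounded_linear L"
    by (simp add: linear_conv_bounded_linear)
  obtain Df where Df: "(f has_derivative Df) (at (L z))"
    using df by (auto simp: differentiable_def)
  have "((\<lambda>w. f (L w)) has_derivative (\<lambda>w. Df (L w))) (at z)"
    using has_derivative_compose[OF bounded_linear_imp_has_derivative[OF L_lin] Df] by (simp add: o_def)
  moreover have "Df (L w) = partial 2 f (L z) * w" for w
  proof -
    have lin: "linear Df"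
      using Df has_derivative_linear by blast
    have "Df (L w) = (- Im w / a) *\<^sub>R Df (axis 1 1) + Re w *\<^sub>R Df (axis 2 1)"
      unfolding L_decomp[of w] by (simp only: linear_add[OF lin] linear_scale[OF lin])
    also have "\<dots> = (- Im w / a) *\<^sub>R partial 1 f (L z) + Re w *\<^sub>R partial 2 f (L z)"
      by (simp add: partial_eq_derivative[OF Df])
    also have "partial 1 f (L z) = - (\<i> * of_real a * partial 2 f (L z))"
      using W[of "L z"] by (simp add: dbar_coord1_def eq_neg_iff_add_eq_0)
    also have "(- Im w / a) *\<^sub>R - (\<i> * of_real a * partial 2 f (L z)) + Re w *\<^sub>R partial 2 f (L z)
        = partial 2 f (L z) * (of_real (Re w) + \<i> * of_real (Im w))"
      using a by (simp add: scaleR_conv_of_real field_simps)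
    finally show ?thesis
      using complex_eq[of w] by simp
  qed
  ultimately show ?thesis
    unfolding has_field_derivative_def by simp
qed

lemma dbar_closed_invariant_function_constant:
  fixes f :: "real^6 \<Rightarrow> complex"
  assumes a: "a \<noteq> 0" and c: "c \<noteq> 0" and a0: "a0 > 0" and sm: "smooth f" and gi: "gamma_inv a0 P f"
    and W: "\<And>g. dbar_coord1 a f g = 0" and A: "\<And>g. dbar_coord2 c f g = 0"
    and B: "\<And>g. dbar_coord3 b c f g = 0"
  shows "\<exists>z. \<forall>g. f g = z"
proof -
  have df: "\<And>p. f differentiable (at p)"
    using smoothD(1)[OF sm] .
  define h where "h = (\<lambda>t x. f (tx_point t x))"
  have fh: "f g = h (g$1) (g$2)" for g
    unfolding h_def by (rule eq_at_tx_point[OF df transverse_partials_vanish[OF sm c W A B]])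
  have Gmul_12: "Gmul \<gamma> g $ 1 = \<gamma>$1 + g$1" "Gmul \<gamma> g $ 2 = \<gamma>$2 + g$2" for \<gamma> g
    by (simp_all add: Gmul_def)
  have p1: "h (a0 + t) x = h t x" for t x
  proof -
    have "h t x = f (Gmul (tx_point a0 0) (tx_point t x))"
      using gi tx_point_in_Lattice(1) unfolding gamma_inv_def h_def by metis
    also have "\<dots> = h (a0 + t) x"
      by (simp add: fh Gmul_12)
    finally show ?thesis
      by simp
  qed
  have p2: "h t (1 + x) = h t x" for t x
  proof -
    have "h t x = f (Gmul (tx_point 0 1) (tx_point t x))"
      using gi tx_point_in_Lattice(2) unfolding gamma_inv_def h_def by metis
    also have "\<dots> = h t (1 + x)"
      by (simp add: fh Gmul_12)
    finally show ?thesis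
      by simp
  qed
  have "continuous_on UNIV f"
    using df differentiable_imp_continuous_within continuous_at_imp_continuous_on by blast
  then have hc: "continuous_on UNIV (\<lambda>p. h (fst p) (snd p))"
    unfolding h_def using continuous_on_compose2[OF _ continuous_on_tx_point] by blast
  then obtain M where M: "\<And>t x. norm (h t x) \<le> M"
    using doubly_periodic_bounded[OF hc a0 p1 p2] by blast
  define F where "F = (\<lambda>w. h (- Im w / a) (Re w))"
  have "F holomorphic_on UNIV"
    using has_field_derivative_tx_point[OF a df W]
    unfolding holomorphic_on_def F_def h_def field_differentiable_def
    by (blast intro: has_field_derivative_at_within)
  moreover have "bounded (range F)"
    unfolding bounded_iff F_def using M by blast
  ultimately have "F constant_on UNIV"
    by (rule Liouville_theorem)
  then obtain k where k: "\<And>w. F w = k"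
    by (auto simp: constant_on_def)
  have "h t x = k" for t x
    using k[of "of_real x - \<i> * of_real (a * t)"] a by (simp add: F_def)
  then show ?thesis
    using fh by auto
qed


section \<open>The three cohomology groups\<close>

lemma phi1_in_H_Dol_p0: "(\<lambda>g. lscale z (gen 0)) \<in> H_Dol_p0 a b c a0 P 1"
proof -
  have "is_form a0 P 1 0 (\<lambda>g. lscale z (gen 0))"
    by (auto simp: is_form_def gen_def bideg_def smooth_const gamma_inv_def)
  moreover have "dform a b c (\<lambda>g. lscale z (gen 0)) g = lzero" for g
    unfolding dform_def fun_eq_iff by (auto simp: gen_def dtheta_0 intro!: sum.neutral)
  ultimately show ?thesis
    by (simp add: H_Dol_p0_def dbar_def mubar_def proj_def fun_eq_iff)
qed

lemma H_Dol_p0_1_zero_coeffs: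
  assumes H: "\<psi> \<in> H_Dol_p0 a b c a0 P 1" and a: "a \<noteq> 0" and c: "c \<noteq> 0"
  shows "\<psi> g {1} = 0" "\<psi> g {2} = 0" "\<psi> g {} = 0" "\<psi> g {0,1} = 0" "\<psi> g {0,2} = 0"
    "\<psi> g {1,2} = 0" "\<psi> g {0,1,2} = 0"
proof -
  show z: "\<psi> h {} = 0" "\<psi> h {0,1} = 0" "\<psi> h {0,2} = 0" "\<psi> h {1,2} = 0" "\<psi> h {0,1,2} = 0" for h
    by (rule H_Dol_p0_bideg[OF H]; simp add: bideg_def)+
  note dform_eq = H_Dol_p0_dform_eq[OF H]
  have "\<psi> g {1} * (- 1 / (2 * of_real a)) + \<psi> g {2} * (of_real c / 4) = 0"
    using H_Dol_p0_mubar[OF H, of "{3,4}" g] unfolding dform_eq sum_Pow_012 using a c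
    by (simp add: bideg_def z z[unfolded One_nat_def] wedge_mono_not_subset dmono_list_simps
        dtheta_mubar_coeffs dtheta_mubar_coeffs' dtheta_0)
  moreover have "\<psi> g {1} * (of_real c / 4) + \<psi> g {2} * (1 / (2 * of_real a)) = 0"
    using H_Dol_p0_mubar[OF H, of "{3,5}" g] unfolding dform_eq sum_Pow_012 using a c
    by (simp add: bideg_def z z[unfolded One_nat_def] wedge_mono_not_subset dmono_list_simps
        dtheta_mubar_coeffs dtheta_mubar_coeffs' dtheta_0)
  ultimately show "\<psi> g {1} = 0" "\<psi> g {2} = 0"
    using mubar_matrix_injective[OF a] by blast+
qed

lemma H_Dol_p0_1_dfun:
  assumes H: "\<psi> \<in> H_Dol_p0 a b c a0 P 1" and a: "a \<noteq> 0" and c: "c \<noteq> 0" and k: "k \<in> {3,4,5}"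
  shows "dfun a b c (\<lambda>h. \<psi> h {0}) g {k} = 0"
proof -
  note z = H_Dol_p0_1_zero_coeffs[OF H a c]
  have "dform a b c \<psi> g {0,k} = - dfun a b c (\<lambda>h. \<psi> h {0}) g {k}"
    using k unfolding H_Dol_p0_dform_eq[OF H] sum_Pow_012
    by (auto simp: z z[unfolded One_nat_def] wedge_mono_not_subset
        dmono_list_simps dtheta_0 wedge_doubleton insert_eq_iff_sorted_list)
  moreover have "dform a b c \<psi> g {0,k} = 0"
    using k by (intro H_Dol_p0_dbar[OF H]) (auto simp: bideg_def)
  ultimately show ?thesis
    by simp
qed

lemma H_Dol_p0_1:
  assumes a: "a \<noteq> 0" and c: "c \<noteq> 0" and a0: "a0 > 0"
  shows "H_Dol_p0 a b c a0 P 1 = {\<psi>. \<exists>z. \<psi> = (\<lambda>g. lscale z (gen 0))}"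
proof (intro equalityI subsetI)
  fix \<psi> assume H: "\<psi> \<in> H_Dol_p0 a b c a0 P 1"
  define f where "f = (\<lambda>g. \<psi> g {0})"
  have sm: "smooth f" and gi: "gamma_inv a0 P f"
    using H_Dol_p0_is_form[OF H] by (auto simp: is_form_def f_def)
  have dfun_0: "dfun a b c f g {k} = 0" if "k \<in> {3,4,5}" for g k
    unfolding f_def using H_Dol_p0_1_dfun[OF H a c that] .
  have "\<exists>w. \<forall>g. f g = w"
    by (rule dbar_closed_invariant_function_constant[OF a c a0 sm gi, where b=b];
        rule dbar_coords_eq_0[OF a c]; rule dfun_0; simp)
  then obtain w where w: "\<And>g. \<psi> g {0} = w"
    unfolding f_def by blast
  have "\<psi> g K = lscale w (gen 0) K" for g K
  proof (cases "K \<subseteq> {0,1,2}")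
    case True
    then show ?thesis
      using subset_012_cases[OF True] w H_Dol_p0_1_zero_coeffs[OF H a c] by (auto simp: gen_def)
  qed (auto simp: H_Dol_p0_support[OF H] gen_def)
  then show "\<psi> \<in> {\<psi>. \<exists>z. \<psi> = (\<lambda>g. lscale z (gen 0))}"
    by blast
qed (use phi1_in_H_Dol_p0 in blast)

theorem mainTheorem4:
  fixes a b c a0 :: real and B P :: "real^2^2"
  assumes "a \<noteq> 0" and "c \<noteq> 0"
    and "a0 > 0"
    and "\<forall>i j. B$i$j \<in> \<int>" and "det B = 1"
    and "invertible P"
    and "P ** B ** matrix_inv P = (\<chi> i j. if i = j then (if i = 1 then exp a0 else exp (- a0)) else 0)"
  shows "H_Dol_p0 a b c a0 P 1 = {\<psi>. \<exists>z. \<psi> = (\<lambda>g. lscale z (gen 0))}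
       \<and> H_Dol_p0 a b c a0 P 2 = {\<lambda>g. lzero}
       \<and> H_Dol_p0 a b c a0 P 3 = {\<lambda>g. lzero}"
  using H_Dol_p0_1[OF assms(1-3)] H_Dol_p0_2[OF assms(1,2)] H_Dol_p0_3[OF assms(1,2)] by blast

end
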